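(* Let $(\mathcal{X},\|\cdot\|)$ be a real Banach space, $P$ a probability distribution on a measurable space $\mathcal{E}$, and $Q,P_e:\mathcal{X}\to\mathcal{X}$ with $\|Q(\theta_1)-Q(\theta_2)\|\le\rho\|\theta_1-\theta_2\|$ ($\rho\in[0,1)$, $\theta^\star$ the unique fixed point of $Q$) and $\|P_e(\theta_1)-P_e(\theta_2)\|\le L\|\theta_1-\theta_2\|$ for all $e$ ($L\ge0$). Let $W_e:=\|P_e(\theta^\star)-\theta^\star\|$ and assume $\mathbb{E}[W_e]\le\sigma$ and $W_e\le M$ almost surely, where $0\le\sigma\le M$, and that $\gamma:=\rho L<1$. Let $\theta_0\in\mathcal{X}$, $e_0,e_1,\dots$ i.i.d. $\sim P$, $\theta_{t+1}=Q(P_{e_t}(\theta_t))$, and $R_0:=\|\theta_0-\theta^\star\|$. For every $r>\rho M/(1-\gamma)$ define $T_0(r):=0$ if $R_0\le r-\rho M/(1-\gamma)$, and otherwise \[T_0(r):=\left\lceil\frac{\log\big(R_0/(r-\rho M/(1-\gamma))\big)}{\log(1/\gamma)}\right\rceil.\] Then $\|\theta_t-\theta^\star\|\le r$ almost surely for all $t\ge T_0(r)$. *)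

theory Defs
  imports "HOL-Probability.Probability"
begin

fun theta_seq :: "('a \<Rightarrow> 'a) \<Rightarrow> ('e \<Rightarrow> 'a \<Rightarrow> 'a) \<Rightarrow> 'a \<Rightarrow> (nat \<Rightarrow> 'e) \<Rightarrow> nat \<Rightarrow> 'a" where
  "theta_seq Q Pe th0 es 0 = th0"
| "theta_seq Q Pe th0 es (Suc t) = Q (Pe (es t) (theta_seq Q Pe th0 es t))"

text \<open>When gamma = 0 the paper's formula contains log(1/0); we use its limiting
  value as gamma tends to 0 from above, namely 1 (ceiling of a positive
  quantity tending to 0).\<close>
definition T0 :: "real \<Rightarrow> real \<Rightarrow> real \<Rightarrow> real \<Rightarrow> real \<Rightarrow> nat" where
  "T0 R0 \<rho> \<gamma> M r =
     (let c = r - \<rho> * M / (1 - \<gamma>) in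
      if R0 \<le> c then 0
      else if \<gamma> = 0 then 1
      else nat \<lceil>ln (R0 / c) / ln (1 / \<gamma>)\<rceil>)"

end

theory Submission
  imports Defs
begin

text \<open>On every sample path with W(e_t) \<le> M for all t, the error u_t = norm (theta_t - theta_star)
  satisfies u_{t+1} \<le> \<rho> (L u_t + M), hence u_t \<le> \<gamma>^t R_0 + \<rho> M / (1 - \<gamma>); the choice
  of T_0(r) makes \<gamma>^t R_0 \<le> r - \<rho> M / (1 - \<gamma>) for t \<ge> T_0(r). Since each e_t has law P,
  almost every path has W(e_t) \<le> M for all t simultaneously.\<close>

lemma affine_recurrence_le_geometric:
  fixes u :: "nat \<Rightarrow> real"
  assumes g: "0 \<le> g" "g < 1" and b: "0 \<le> b"
    and step: "\<And>n. u (Suc n) \<le> g * u n + b"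
  shows "u n \<le> g ^ n * u 0 + b / (1 - g)"
proof (induction n)
  case 0
  show ?case using g b by simp
next
  case (Suc n)
  have "u (Suc n) \<le> g * u n + b" by (rule step)
  also have "\<dots> \<le> g * (g ^ n * u 0 + b / (1 - g)) + b"
    using Suc.IH g by (simp add: mult_left_mono)
  also have "\<dots> = g ^ Suc n * u 0 + b / (1 - g)"
    using g by (simp add: field_simps)
  finally show ?case .
qed

lemma theta_seq_dist_le:
  fixes Q :: "'a::real_normed_vector \<Rightarrow> 'a" and Pe :: "'e \<Rightarrow> 'a \<Rightarrow> 'a"
  assumes Q_contr: "\<And>x y. norm (Q x - Q y) \<le> \<rho> * norm (x - y)"
    and Q_fix: "Q \<theta>s = \<theta>s" and rho: "0 \<le> \<rho>"
    and Pe_lip: "\<And>\<epsilon> x y. norm (Pe \<epsilon> x - Pe \<epsilon> y) \<le> L * norm (x - y)"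
    and W: "\<And>n. norm (Pe (es n) \<theta>s - \<theta>s) \<le> M"
    and L: "0 \<le> L" and gamma: "\<rho> * L < 1"
  shows "norm (theta_seq Q Pe \<theta>0 es t - \<theta>s)
           \<le> (\<rho> * L) ^ t * norm (\<theta>0 - \<theta>s) + \<rho> * M / (1 - \<rho> * L)"
proof -
  have M: "0 \<le> M" using norm_ge_zero W[of 0] by (rule order_trans)
  have step: "norm (Q (Pe (es n) x) - \<theta>s) \<le> \<rho> * L * norm (x - \<theta>s) + \<rho> * M" for n x
  proof -
    have "norm (Pe (es n) x - \<theta>s)
            \<le> norm (Pe (es n) x - Pe (es n) \<theta>s) + norm (Pe (es n) \<theta>s - \<theta>s)"
      using norm_triangle_ineq[of "Pe (es n) x - Pe (es n) \<theta>s" "Pe (es n) \<theta>s - \<theta>s"] by simp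
    also have "\<dots> \<le> L * norm (x - \<theta>s) + M" using Pe_lip W by (rule add_mono)
    finally have "\<rho> * norm (Pe (es n) x - \<theta>s) \<le> \<rho> * (L * norm (x - \<theta>s) + M)"
      using rho by (rule mult_left_mono)
    moreover have "norm (Q (Pe (es n) x) - \<theta>s) \<le> \<rho> * norm (Pe (es n) x - \<theta>s)"
      using Q_contr[of "Pe (es n) x" \<theta>s] Q_fix by simp
    ultimately show ?thesis by (simp add: algebra_simps)
  qed
  show ?thesis
    by (rule affine_recurrence_le_geometric[where u = "\<lambda>t. norm (theta_seq Q Pe \<theta>0 es t - \<theta>s)",
          simplified, OF _ gamma _ step]) (use rho L M in auto)
qed

lemma power_mult_le_of_ln_ratio_le:
  fixes g R c :: real
  assumes g: "0 < g" "g < 1" and c: "0 < c" and R: "0 < R"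
    and t: "ln (R / c) / ln (1 / g) \<le> t"
  shows "g ^ t * R \<le> c"
proof -
  have "0 < ln (1 / g)" using g by simp
  then have "ln (R / c) \<le> t * ln (1 / g)" using t by (simp add: divide_le_eq)
  also have "\<dots> = ln ((1 / g) ^ t)" using g by (simp add: ln_realpow)
  finally have "R / c \<le> (1 / g) ^ t" using R c g by simp
  then show ?thesis using g c by (simp add: field_simps power_one_over)
qed

lemma power_mult_le_after_T0:
  fixes g R \<rho> M r :: real
  assumes g: "0 \<le> g" "g < 1" and R: "0 \<le> R" and r: "0 < r - \<rho> * M / (1 - g)"
    and t: "T0 R \<rho> g M r \<le> t"
  shows "g ^ t * R \<le> r - \<rho> * M / (1 - g)"
proof -
  define c where "c = r - \<rho> * M / (1 - g)"
  consider "R \<le> c" | "c < R" "g = 0" | "c < R" "0 < g" using g by fastforce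
  then show ?thesis
  proof cases
    case 1
    have "g ^ t * R \<le> 1 * R" using g R by (intro mult_right_mono power_le_one) auto
    then show ?thesis using 1 by (simp add: c_def)
  next
    case 2
    then have "0 < t" using t by (simp add: T0_def c_def)
    then show ?thesis using 2 r by (simp add: c_def zero_power)
  next
    case 3
    then have "ln (R / c) / ln (1 / g) \<le> t" using t by (simp add: T0_def c_def Let_def)
    then show ?thesis
      using power_mult_le_of_ln_ratio_le[OF 3(2) g(2) r] 3 r by (simp add: c_def)
  qed
qed

lemma AE_all_of_identically_distributed:
  fixes X :: "'i::countable \<Rightarrow> 'w \<Rightarrow> 'e"
  assumes X_meas: "\<And>n. X n \<in> measurable \<Omega> P"
    and X_distr: "\<And>n. distr \<Omega> P (X n) = P"
    and pred_sets: "{x \<in> space P. A x} \<in> sets P"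
    and AE_P: "AE x in P. A x"
  shows "AE \<omega> in \<Omega>. \<forall>n. A (X n \<omega>)"
proof -
  have "AE \<omega> in \<Omega>. A (X n \<omega>)" for n
  proof -
    have "AE x in distr \<Omega> P (X n). A x" unfolding X_distr by (rule AE_P)
    then show ?thesis using AE_distr_iff[OF X_meas pred_sets] by blast
  qed
  then show ?thesis unfolding AE_all_countable by blast
qed

theorem lemma4p13:
  fixes Q :: "'a::banach \<Rightarrow> 'a"
    and Pe :: "'e \<Rightarrow> 'a \<Rightarrow> 'a"
    and P :: "'e measure"
    and \<Omega> :: "'w measure"
    and e :: "nat \<Rightarrow> 'w \<Rightarrow> 'e"
    and \<rho> L \<sigma> M r :: real
    and \<theta>s \<theta>0 :: 'a
  assumes P_prob: "prob_space P"
    and \<Omega>_prob: "prob_space \<Omega>"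
    and rho: "0 \<le> \<rho>" "\<rho> < 1"
    and Q_contr: "\<And>x y. norm (Q x - Q y) \<le> \<rho> * norm (x - y)"
    and Q_fix: "Q \<theta>s = \<theta>s"
    and Q_fix_unique: "\<And>\<theta>. Q \<theta> = \<theta> \<Longrightarrow> \<theta> = \<theta>s"
    and L: "0 \<le> L"
    and Pe_lip: "\<And>\<epsilon> x y. norm (Pe \<epsilon> x - Pe \<epsilon> y) \<le> L * norm (x - y)"
    and W_meas: "(\<lambda>\<epsilon>. norm (Pe \<epsilon> \<theta>s - \<theta>s)) \<in> borel_measurable P"
    and W_mean: "(\<integral>\<epsilon>. norm (Pe \<epsilon> \<theta>s - \<theta>s) \<partial>P) \<le> \<sigma>"
    and W_bound: "AE \<epsilon> in P. norm (Pe \<epsilon> \<theta>s - \<theta>s) \<le> M"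
    and sigma_M: "0 \<le> \<sigma>" "\<sigma> \<le> M"
    and gamma: "\<rho> * L < 1"
    and e_meas: "\<And>t. e t \<in> measurable \<Omega> P"
    and e_indep: "prob_space.indep_vars \<Omega> (\<lambda>_. P) e UNIV"
    and e_distr: "\<And>t. distr \<Omega> P (e t) = P"
    and r: "r > \<rho> * M / (1 - \<rho> * L)"
  shows "AE \<omega> in \<Omega>. \<forall>t \<ge> T0 (norm (\<theta>0 - \<theta>s)) \<rho> (\<rho> * L) M r.
           norm (theta_seq Q Pe \<theta>0 (\<lambda>n. e n \<omega>) t - \<theta>s) \<le> r"
proof -
  have "{\<epsilon> \<in> space P. norm (Pe \<epsilon> \<theta>s - \<theta>s) \<le> M} \<in> sets P"
    using W_meas by measurable
  then have "AE \<omega> in \<Omega>. \<forall>n. norm (Pe (e n \<omega>) \<theta>s - \<theta>s) \<le> M"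
    by (rule AE_all_of_identically_distributed[OF e_meas e_distr _ W_bound])
  then show ?thesis
  proof eventually_elim
    case (elim \<omega>)
    show ?case
    proof (intro allI impI)
      fix t assume t: "T0 (norm (\<theta>0 - \<theta>s)) \<rho> (\<rho> * L) M r \<le> t"
      have "norm (theta_seq Q Pe \<theta>0 (\<lambda>n. e n \<omega>) t - \<theta>s)
              \<le> (\<rho> * L) ^ t * norm (\<theta>0 - \<theta>s) + \<rho> * M / (1 - \<rho> * L)"
        by (rule theta_seq_dist_le[OF Q_contr Q_fix rho(1) Pe_lip _ L gamma]) (use elim in auto)
      also have "\<dots> \<le> r"
        using power_mult_le_after_T0[OF _ gamma _ _ t] rho L r by simp
      finally show "norm (theta_seq Q Pe \<theta>0 (\<lambda>n. e n \<omega>) t - \<theta>s) \<le> r" .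
    qed
  qed
qed

end
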